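(* Let $K\ge 1$, $m\ge 1$, and let $\mathcal L_1,\dots,\mathcal L_K:\mathbb R^m\to[0,\infty)$ be differentiable functions such that each $\mathcal L_k$ is $\nu_k$-smooth. Write $\boldsymbol{\mathcal L}(\vartheta)=(\mathcal L_1(\vartheta),\dots,\mathcal L_K(\vartheta))$. For every $\boldsymbol\lambda\in\Delta^K$ let $\vartheta_{\boldsymbol\lambda}\in\mathbb R^m$ be a minimizer of a fixed scalarization $s_{\boldsymbol\lambda}\circ\boldsymbol{\mathcal L}$ (in item 1, of the linear scalarization $\sum_k\lambda_k\mathcal L_k$), and let $\widehat\vartheta_{\boldsymbol\lambda}\in\mathbb R^m$ be arbitrary. Put $G_k:=\sup_{\boldsymbol\lambda\in\Delta^K}\|\nabla\mathcal L_k(\vartheta_{\boldsymbol\lambda})\|_2$, and for $G,\nu\ge 0$ $$\varepsilon(G,\nu,\boldsymbol\lambda):=G\|\widehat\vartheta_{\boldsymbol\lambda}-\vartheta_{\boldsymbol\lambda}\|_2+\tfrac{\nu}{2}\|\widehat\vartheta_{\boldsymbol\lambda}-\vartheta_{\boldsymbol\lambda}\|_2^2,\qquad \varepsilon_{\max}:=\max_{k\in[K],\,\boldsymbol\lambda\in\Delta^K}\varepsilon(G_k,\nu_k,\boldsymbol\lambda).$$ Then: 1. For linear scalarization, $\sum_k\lambda_k\mathcal L_k(\widehat\vartheta_{\boldsymbol\lambda})-\min_{\vartheta}\sum_k\lambda_k\mathcal L_k(\vartheta)\le \varepsilon\big(0,\sum_k\lambda_k\nu_k,\boldsymbol\lambda\big)$.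 2. For all $k$ and $\boldsymbol\lambda$, $\mathcal L_k(\widehat\vartheta_{\boldsymbol\lambda})-\mathcal L_k(\vartheta_{\boldsymbol\lambda})\le\varepsilon(G_k,\nu_k,\boldsymbol\lambda)$. 3. Let $\mathrm{PF}=\{\boldsymbol{\mathcal L}(\vartheta_{\boldsymbol\lambda}):\boldsymbol\lambda\in\Delta^K\}$ and $\widehat{\mathrm{PF}}=\{\boldsymbol{\mathcal L}(\widehat\vartheta_{\boldsymbol\lambda}):\boldsymbol\lambda\in\Delta^K\}$, and let $r\ge 2\sup_{\boldsymbol\lambda\in\Delta^K}\|\boldsymbol{\mathcal L}(\vartheta_{\boldsymbol\lambda})\|_\infty$ be such that $\widehat{\mathrm{PF}}\subset[0,r]^K$ and $\varepsilon_{\max}\le r/2$. Then $\mathrm{HV}_r(\widehat{\mathrm{PF}})\ge(1-2\varepsilon_{\max}/r)^K\,\mathrm{HV}_r(\mathrm{PF})$.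
   Context: $\Delta^K=\{\boldsymbol\lambda\in\mathbb R^K:\lambda_k\ge0,\sum_k\lambda_k=1\}$. A scalarization is a function $s_{\boldsymbol\lambda}:\mathbb R^K\to\mathbb R$ indexed by $\boldsymbol\lambda\in\Delta^K$; linear scalarization is $s_{\boldsymbol\lambda}(x)=\sum_k\lambda_kx_k$. A differentiable $f$ is $\nu$-smooth if $\nabla f$ is $\nu$-Lipschitz in $\ell_2$. For $\mathcal S\subset[0,r]^K$ the hypervolume is $\mathrm{HV}_r(\mathcal S)=\mathrm{vol}(\{x\in[0,r]^K:\exists s\in\mathcal S,\ s\preceq x\})$, where $\mathrm{vol}$ is Lebesgue measure on $\mathbb R^K$ and $s\preceq x$ means $s_i\le x_i$ for all $i$. *)

theory Defs
  imports "HOL-Analysis.Analysis"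
begin

definition prob_simplex :: "(real ^ 'k) set" where
  "prob_simplex = {l. (\<forall>k. 0 \<le> l $ k) \<and> (\<Sum>k\<in>UNIV. l $ k) = 1}"

definition Lvec :: "('k \<Rightarrow> 'a \<Rightarrow> real) \<Rightarrow> 'a \<Rightarrow> real ^ 'k" where
  "Lvec L t = (\<chi> k. L k t)"

definition HV :: "real \<Rightarrow> (real ^ 'k) set \<Rightarrow> real" where
  "HV r S = measure lebesgue
     {x :: real ^ 'k. (\<forall>i. 0 \<le> x $ i \<and> x $ i \<le> r) \<and> (\<exists>s\<in>S. \<forall>i. s $ i \<le> x $ i)}"

text \<open>epsilon(G, nu, lambda) with G possibly infinite (extended real; 0 * inf = 0).\<close>
definition eps :: "ereal \<Rightarrow> real \<Rightarrow> 'm::real_normed_vector \<Rightarrow> 'm \<Rightarrow> ereal" where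
  "eps G nu thhat th = G * ereal (norm (thhat - th)) + ereal (nu / 2 * (norm (thhat - th))^2)"

definition Gsup :: "('k \<Rightarrow> 'a \<Rightarrow> 'a::real_normed_vector) \<Rightarrow> (real ^ 'j::finite \<Rightarrow> 'a) \<Rightarrow> 'k \<Rightarrow> ereal" where
  "Gsup gradL th k = (SUP l\<in>prob_simplex. ereal (norm (gradL k (th l))))"

end

(*
  Items 1 and 2 rest on the descent lemma for a function with nu-Lipschitz gradient g,
  f y <= f x + <g x, y - x> + nu/2 |y - x|^2: at a minimizer of the linear scalarization the
  gradient of the (sum lambda_k nu_k)-smooth weighted sum vanishes, and for a single objective
  Cauchy-Schwarz bounds <grad L_k(th l), y - x> by G_k |y - x|.

  By item 2 every point of PF is dominated, up to epsmax in each coordinate, by a point of the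
  approximate front. The affine map x |-> (1 - 2 epsmax/r) x + 2 epsmax (1,...,1) contracts
  [0,r]^K into [2 epsmax, r]^K and raises every point of [0, r/2]^K by at least epsmax, so it
  carries the region dominated by PF into the region dominated by the approximate front while
  scaling volumes by (1 - 2 epsmax/r)^K.
*)
theory Submission
  imports Defs
begin

lemma lipschitz_gradient_descent_bound:
  fixes f :: "'a::real_inner \<Rightarrow> real"
  assumes grad: "\<And>x. GDERIV f x :> g x" and lip: "lipschitz_on nu UNIV g"
  shows "f y \<le> f x + g x \<bullet> (y - x) + nu / 2 * (norm (y - x))\<^sup>2"
proof -
  define d where "d = y - x"
  define h where "h t = f (x + t *\<^sub>R d) - t * (g x \<bullet> d) - nu / 2 * t\<^sup>2 * (norm d)\<^sup>2" for t
  have "h 1 \<le> h 0"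
  proof (rule DERIV_nonpos_imp_nonincreasing[of 0 1 h])
    fix t :: real assume t: "0 \<le> t"
    have "((\<lambda>t. x + t *\<^sub>R d) has_derivative (\<lambda>s. s *\<^sub>R d)) (at t)"
      by (auto intro!: derivative_eq_intros)
    then have "((\<lambda>t. f (x + t *\<^sub>R d)) has_derivative (\<lambda>s. (s *\<^sub>R d) \<bullet> g (x + t *\<^sub>R d))) (at t)"
      using grad unfolding gderiv_def by (rule has_derivative_compose)
    then have "((\<lambda>t. f (x + t *\<^sub>R d)) has_real_derivative d \<bullet> g (x + t *\<^sub>R d)) (at t)"
      by (rule has_derivative_imp_has_field_derivative) (simp add: inner_commute)
    then have "(h has_real_derivative (g (x + t *\<^sub>R d) - g x) \<bullet> d - nu * t * (norm d)\<^sup>2) (at t)"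
      unfolding h_def by (auto intro!: derivative_eq_intros simp: inner_diff_left inner_diff_right inner_commute)
    moreover have "(g (x + t *\<^sub>R d) - g x) \<bullet> d \<le> nu * t * (norm d)\<^sup>2"
    proof -
      have "(g (x + t *\<^sub>R d) - g x) \<bullet> d \<le> norm (g (x + t *\<^sub>R d) - g x) * norm d"
        by (rule norm_cauchy_schwarz)
      also have "\<dots> \<le> nu * norm (t *\<^sub>R d) * norm d"
        using lipschitz_onD[OF lip, of "x + t *\<^sub>R d" x]
        by (intro mult_right_mono) (auto simp: dist_norm)
      finally show ?thesis
        using t by (simp add: power2_eq_square mult.assoc)
    qed
    ultimately show "\<exists>y. (h has_real_derivative y) (at t) \<and> y \<le> 0"
      by auto
  qed simp
  then show ?thesis
    by (simp add: h_def d_def algebra_simps)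
qed

lemma GDERIV_zero_at_minimum:
  assumes "GDERIV f x :> D" "\<And>y. f x \<le> f y"
  shows "D = 0"
proof -
  have "(\<lambda>h. h \<bullet> D) = (\<lambda>h. 0)"
    using assms by (intro differential_zero_maxmin[of x UNIV f]) (auto simp: gderiv_def)
  then have "D \<bullet> D = 0"
    by metis
  then show ?thesis
    by simp
qed

lemma GDERIV_weighted_sum:
  assumes "\<And>k. k \<in> K \<Longrightarrow> GDERIV (f k) x :> D k"
  shows "GDERIV (\<lambda>x. \<Sum>k\<in>K. w k * f k x) x :> (\<Sum>k\<in>K. w k *\<^sub>R D k)"
proof -
  have "((\<lambda>x. \<Sum>k\<in>K. w k * f k x) has_derivative (\<lambda>h. \<Sum>k\<in>K. w k * (h \<bullet> D k))) (at x)"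
    using assms by (intro has_derivative_sum has_derivative_mult_right) (simp add: gderiv_def)
  then show ?thesis
    by (simp add: gderiv_def inner_sum_right)
qed

lemma lipschitz_on_weighted_sum:
  fixes g :: "'k \<Rightarrow> 'a::metric_space \<Rightarrow> 'b::real_normed_vector"
  assumes "finite K" "\<And>k. k \<in> K \<Longrightarrow> 0 \<le> w k" "\<And>k. k \<in> K \<Longrightarrow> lipschitz_on (C k) U (g k)"
  shows "lipschitz_on (\<Sum>k\<in>K. w k * C k) U (\<lambda>x. \<Sum>k\<in>K. w k *\<^sub>R g k x)"
  using assms by (induction K rule: finite_induct) (auto intro!: lipschitz_intros)

lemma eps_nonneg: "0 \<le> G \<Longrightarrow> 0 \<le> nu \<Longrightarrow> 0 \<le> eps G nu a b"
  by (simp add: eps_def)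

lemma gap_le_eps_of_gradient_bound:
  fixes f :: "'a::real_inner \<Rightarrow> real"
  assumes grad: "\<And>x. GDERIV f x :> g x" and lip: "lipschitz_on nu UNIV g"
    and G: "ereal (norm (g x)) \<le> G"
  shows "ereal (f y - f x) \<le> eps G nu y x"
proof -
  have "f y - f x \<le> norm (g x) * norm (y - x) + nu / 2 * (norm (y - x))\<^sup>2"
    using lipschitz_gradient_descent_bound[OF grad lip, of y x] norm_cauchy_schwarz[of "g x" "y - x"]
    by linarith
  then have "ereal (f y - f x) \<le> ereal (norm (g x)) * ereal (norm (y - x)) + ereal (nu / 2 * (norm (y - x))\<^sup>2)"
    by simp
  also have "\<dots> \<le> G * ereal (norm (y - x)) + ereal (nu / 2 * (norm (y - x))\<^sup>2)"
    using G by (intro add_right_mono ereal_mult_right_mono) auto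
  finally show ?thesis
    by (simp add: eps_def)
qed

lemma gap_le_eps_at_minimum:
  fixes f :: "'a::real_inner \<Rightarrow> real"
  assumes grad: "\<And>x. GDERIV f x :> g x" and lip: "lipschitz_on nu UNIV g"
    and min: "\<And>t. f x \<le> f t"
  shows "ereal (f y - (INF t. f t)) \<le> eps 0 nu y x"
proof -
  have "(INF t. f t) = f x"
    using min by (intro antisym cINF_lower cINF_greatest bdd_belowI) auto
  moreover have "g x = 0"
    using grad min by (rule GDERIV_zero_at_minimum)
  ultimately show ?thesis
    using lipschitz_gradient_descent_bound[OF grad lip, of y x] by (simp add: eps_def)
qed

lemma weighted_sum_gap_le_eps_at_minimum:
  fixes L :: "'k \<Rightarrow> 'a::real_inner \<Rightarrow> real"
  assumes "finite K"
    and grad: "\<And>k t. k \<in> K \<Longrightarrow> GDERIV (L k) t :> gradL k t"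
    and smooth: "\<And>k. k \<in> K \<Longrightarrow> lipschitz_on (nu k) UNIV (gradL k)"
    and weights: "\<And>k. k \<in> K \<Longrightarrow> 0 \<le> w k"
    and min: "\<And>t. (\<Sum>k\<in>K. w k * L k x) \<le> (\<Sum>k\<in>K. w k * L k t)"
  shows "ereal ((\<Sum>k\<in>K. w k * L k y) - (INF t. \<Sum>k\<in>K. w k * L k t))
    \<le> eps 0 (\<Sum>k\<in>K. w k * nu k) y x"
  using assms
  by (intro gap_le_eps_at_minimum[where g = "\<lambda>t. \<Sum>k\<in>K. w k *\<^sub>R gradL k t"]
      GDERIV_weighted_sum lipschitz_on_weighted_sum) auto

abbreviation cube :: "real \<Rightarrow> real \<Rightarrow> (real ^ 'k) set" where
  "cube a b \<equiv> cbox (\<chi> i. a) (\<chi> i. b)"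

lemma measure_cube:
  assumes "a \<le> b"
  shows "measure lebesgue (cube a b :: (real ^ 'k) set) = (b - a) ^ CARD('k)"
proof -
  have "(\<chi> i. a) \<in> (cube a b :: (real ^ 'k) set)"
    using assms by (simp add: mem_box_cart)
  then have "(cube a b :: (real ^ 'k) set) \<noteq> {}"
    by blast
  then show ?thesis
    by (simp add: content_cbox_cart)
qed

lemma power_diff_arbitrarily_small:
  fixes r e :: real
  assumes "0 < r" "0 < e"
  shows "\<exists>t. 0 < t \<and> t \<le> r \<and> r ^ n - (r - t) ^ n < e"
proof -
  have "((\<lambda>t. (r - t) ^ n) \<longlongrightarrow> (r - 0) ^ n) (at_right 0)"
    by (intro tendsto_intros)
  then have "\<forall>\<^sub>F t in at_right 0. r ^ n - e < (r - t) ^ n"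
    using assms by (intro order_tendstoD(1)) auto
  moreover have "\<forall>\<^sub>F t in at_right 0. t \<in> {0<..<r}"
    using \<open>0 < r\<close> by (rule eventually_at_right_real)
  ultimately have "\<forall>\<^sub>F t in at_right 0. 0 < t \<and> t \<le> r \<and> r ^ n - (r - t) ^ n < e"
    by eventually_elim auto
  then show ?thesis
    by (rule eventually_happens'[OF trivial_limit_at_right_real])
qed

lemma measure_Int_shifted_cube_le:
  fixes A :: "(real ^ 'k) set"
  assumes A: "A \<in> sets lebesgue" and t: "0 < t" "t \<le> r"
  shows "measure lebesgue (A \<inter> cube t (r + t))
    \<le> measure lebesgue (A \<inter> cube 0 r) + (r ^ CARD('k) - (r - t) ^ CARD('k))"
proof -
  have A_cube: "A \<inter> cube a b \<in> lmeasurable" for a b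
    using A by (subst Int_commute) (rule fmeasurable_Int_fmeasurable[OF lmeasurable_cbox])
  have "cube t r \<subseteq> (cube t (r + t) :: (real ^ 'k) set)"
    using t by (auto simp: mem_box_cart) (meson add_increasing2 less_imp_le)
  then have sliver: "measure lebesgue (cube t (r + t) - cube t r :: (real ^ 'k) set)
      = r ^ CARD('k) - (r - t) ^ CARD('k)"
    using t measure_cube[where 'k='k, of t r] measure_cube[where 'k='k, of t "r + t"]
    by (simp add: measurable_measure_Diff fmeasurableD)
  have "A \<inter> cube t (r + t) \<subseteq> (A \<inter> cube 0 r) \<union> (cube t (r + t) - cube t r)"
    using t by (auto simp: mem_box_cart) (meson less_le_trans less_imp_le)
  then have "measure lebesgue (A \<inter> cube t (r + t))
      \<le> measure lebesgue (A \<inter> cube 0 r) + measure lebesgue (cube t (r + t) - cube t r :: (real ^ 'k) set)"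
    by (rule order_trans[OF measure_mono_fmeasurable measure_Un_le])
      (auto intro!: fmeasurableD A_cube fmeasurable.Un fmeasurable.Diff)
  then show ?thesis
    unfolding sliver .
qed

lemma open_strictly_dominated:
  fixes S :: "(real ^ 'k) set"
  shows "open {x. \<exists>s\<in>S. \<forall>i. s $ i < x $ i}"
proof -
  have "open {x :: real ^ 'k. \<forall>i. s $ i < x $ i}" for s :: "real ^ 'k"
    using open_INT[of UNIV "\<lambda>i. {x. s $ i < x $ i}"]
    by (simp add: open_halfspace_component_gt_cart Collect_all_eq)
  then show ?thesis
    unfolding Collect_bex_eq by (auto intro!: open_UN)
qed

definition dominated_region :: "real \<Rightarrow> (real ^ 'k) set \<Rightarrow> (real ^ 'k) set" where
  "dominated_region r S =
     {x. (\<forall>i. 0 \<le> x $ i \<and> x $ i \<le> r) \<and> (\<exists>s\<in>S. \<forall>i. s $ i \<le> x $ i)}"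

lemma HV_eq_measure_dominated_region: "HV r S = measure lebesgue (dominated_region r S)"
  by (simp add: HV_def dominated_region_def)

text \<open>V, the open set of points strictly dominated by S, gives the inner approximation
  V \<inter> [0,r]^K. Shifting by (t,...,t) gives an outer approximation, whose excess volume lies in
  [t,r+t]^K - [t,r]^K and is thus at most r^K - (r-t)^K.\<close>
lemma dominated_region_lmeasurable:
  fixes S :: "(real ^ 'k) set"
  shows "dominated_region r S \<in> lmeasurable"
proof (cases "r \<le> 0")
  case True
  then have "dominated_region r S \<subseteq> {0}"
    by (auto simp: dominated_region_def vec_eq_iff) (meson order_antisym order_trans)
  then show ?thesis
    by (meson negligible_imp_measurable negligible_sing negligible_subset)
next
  case False
  define V where "V = {x. \<exists>s\<in>S. \<forall>i. s $ i < x $ i}"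
  have V: "V \<in> sets lebesgue"
    unfolding V_def using open_strictly_dominated[of S] by (simp add: borel_open)
  have V_cube: "V \<inter> cube a b \<in> lmeasurable" for a b
    using V by (subst Int_commute) (rule fmeasurable_Int_fmeasurable[OF lmeasurable_cbox])
  show ?thesis
    unfolding completion.fmeasurable_inner_outer
  proof (intro allI impI)
    fix e :: real
    assume "0 < e"
    with False obtain t where t: "0 < t" "t \<le> r" "r ^ CARD('k) - (r - t) ^ CARD('k) < e"
      using power_diff_arbitrarily_small by (metis not_le)
    define shift where "shift = (\<lambda>x. x - (\<chi> i. t :: real ^ 'k))"
    have inner: "V \<inter> cube 0 r \<subseteq> dominated_region r S"
      by (auto simp: V_def dominated_region_def mem_box_cart) (blast intro: less_imp_le)
    have outer: "dominated_region r S \<subseteq> shift ` (V \<inter> cube t (r + t))"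
    proof
      fix x assume "x \<in> dominated_region r S"
      then have "x + (\<chi> i. t) \<in> V \<inter> cube t (r + t)"
        using t by (auto simp: V_def dominated_region_def mem_box_cart)
          (metis add.right_neutral add_le_less_mono)
      then show "x \<in> shift ` (V \<inter> cube t (r + t))"
        by (intro image_eqI[of _ _ "x + (\<chi> i. t)"]) (auto simp: shift_def)
    qed
    have outer_lmeasurable: "shift ` (V \<inter> cube t (r + t)) \<in> lmeasurable"
      unfolding shift_def by (rule measurable_translation_subtract[OF V_cube])
    have "measure lebesgue (shift ` (V \<inter> cube t (r + t))) = measure lebesgue (V \<inter> cube t (r + t))"
      unfolding shift_def by (rule measure_translation_subtract)
    then have "measure lebesgue (shift ` (V \<inter> cube t (r + t))) - measure lebesgue (V \<inter> cube 0 r) < e"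
      using measure_Int_shifted_cube_le[OF V t(1,2)] t(3) by linarith
    moreover have "measure lebesgue (V \<inter> cube 0 r) \<le> measure lebesgue (shift ` (V \<inter> cube t (r + t)))"
      using inner outer outer_lmeasurable by (intro measure_mono_fmeasurable) (auto intro: fmeasurableD V_cube)
    ultimately show "\<exists>T\<in>lmeasurable. \<exists>U\<in>lmeasurable. T \<subseteq> dominated_region r S \<and>
        dominated_region r S \<subseteq> U \<and> \<bar>measure lebesgue T - measure lebesgue U\<bar> < e"
      using inner outer by (intro bexI[OF _ V_cube] bexI[OF _ outer_lmeasurable]) auto
  qed
qed

text \<open>The affine map \<psi> fixes the corner (r,...,r) and moves each p with p \<le> r/2 up by at
  least e, so it maps the region dominated by P into the region dominated by Q.\<close>
lemma HV_scaled_le_of_cover: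
  fixes P Q :: "(real ^ 'k) set"
  assumes e: "0 \<le> e" "2 * e \<le> r"
    and P_le: "\<And>p i. p \<in> P \<Longrightarrow> p $ i \<le> r / 2"
    and cover: "\<And>p. p \<in> P \<Longrightarrow> \<exists>q\<in>Q. \<forall>i. q $ i \<le> p $ i + e"
  shows "(1 - 2 * e / r) ^ CARD('k) * HV r P \<le> HV r Q"
proof -
  define c where "c = 1 - 2 * e / r"
  have c: "0 \<le> c" "c \<le> 1" "c * r = r - 2 * e"
    using e by (cases "r = 0"; simp add: c_def field_simps)+
  define \<psi> :: "real ^ 'k \<Rightarrow> real ^ 'k" where "\<psi> x = c *\<^sub>R x + (\<chi> i. 2 * e)" for x
  have "\<psi> ` dominated_region r P \<subseteq> dominated_region r Q"
  proof
    fix y assume "y \<in> \<psi> ` dominated_region r P"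
    then obtain x p where x: "\<And>i. 0 \<le> x $ i" "\<And>i. x $ i \<le> r" and y: "y = \<psi> x"
      and p: "p \<in> P" "\<And>i. p $ i \<le> x $ i"
      by (auto simp: dominated_region_def)
    obtain q where q: "q \<in> Q" "\<And>i. q $ i \<le> p $ i + e"
      using cover[OF p(1)] by blast
    have "0 \<le> y $ i \<and> y $ i \<le> r \<and> q $ i \<le> y $ i" for i
    proof -
      have "c * x $ i \<le> c * r" "c * p $ i \<le> c * x $ i"
        using x p c(1) by (auto intro: mult_left_mono)
      moreover have "(1 - c) * p $ i \<le> (1 - c) * (r / 2)"
        using P_le[OF p(1)] c(2) by (intro mult_left_mono) auto
      ultimately show ?thesis
        using x c e q(2)[of i] by (simp add: y \<psi>_def algebra_simps)
    qed
    with q(1) show "y \<in> dominated_region r Q"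
      by (auto simp: dominated_region_def)
  qed
  then have "emeasure lebesgue (\<psi> ` dominated_region r P) \<le> emeasure lebesgue (dominated_region r Q)"
    by (intro emeasure_mono fmeasurableD dominated_region_lmeasurable)
  moreover have "emeasure lebesgue (\<psi> ` dominated_region r P) = c ^ CARD('k) * HV r P"
    using emeasure_lebesgue_affine[of c "\<chi> i. 2 * e" "dominated_region r P"] c(1)
    by (simp add: \<psi>_def[abs_def] HV_eq_measure_dominated_region emeasure_eq_measure2
        dominated_region_lmeasurable ennreal_mult)
  ultimately show ?thesis
    using c(1) by (simp add: HV_eq_measure_dominated_region emeasure_eq_measure2
        dominated_region_lmeasurable c_def[symmetric])
qed

lemma HV_front_approx_ge:
  fixes a b :: "'l \<Rightarrow> real ^ 'k"
  assumes e: "0 \<le> e" "2 * e \<le> r"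
    and a_le: "\<And>l. l \<in> \<Lambda> \<Longrightarrow> 2 * infnorm (a l) \<le> r"
    and b_le: "\<And>l i. l \<in> \<Lambda> \<Longrightarrow> b l $ i \<le> a l $ i + e"
  shows "(1 - 2 * e / r) ^ CARD('k) * HV r (a ` \<Lambda>) \<le> HV r (b ` \<Lambda>)"
proof (rule HV_scaled_le_of_cover[OF e])
  show "p $ i \<le> r / 2" if "p \<in> a ` \<Lambda>" for p i
    using that a_le component_le_infnorm_cart[of p i] by force
  show "\<exists>q\<in>b ` \<Lambda>. \<forall>i. q $ i \<le> p $ i + e" if "p \<in> a ` \<Lambda>" for p
    using that b_le by blast
qed

lemma uniform_in_prob_simplex: "(\<chi> i. 1 / real CARD('k)) \<in> (prob_simplex :: (real ^ 'k) set)"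
  by (simp add: prob_simplex_def)

lemma Gsup_ge_norm: "l \<in> prob_simplex \<Longrightarrow> ereal (norm (gradL k (th l))) \<le> Gsup gradL th k"
  unfolding Gsup_def by (rule SUP_upper)

lemma SUP_eps_nonneg:
  fixes th thhat :: "real ^ 'k::finite \<Rightarrow> 'a::real_normed_vector"
  assumes "\<And>k. 0 \<le> nu k"
  shows "0 \<le> (SUP p\<in>UNIV \<times> prob_simplex. eps (Gsup gradL th (fst p)) (nu (fst p)) (thhat (snd p)) (th (snd p)))"
proof -
  define u :: "real ^ 'k" where "u = (\<chi> i. 1 / real CARD('k))"
  have u: "u \<in> prob_simplex"
    unfolding u_def by (rule uniform_in_prob_simplex)
  have "0 \<le> Gsup gradL th k" for k
    by (rule order_trans[OF _ Gsup_ge_norm[OF u]]) simp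
  then have "0 \<le> eps (Gsup gradL th k) (nu k) (thhat u) (th u)" for k
    using assms by (rule eps_nonneg)
  then show ?thesis
    using u by (intro SUP_upper2[of "(undefined, u)"]) auto
qed

theorem proposition1:
  fixes L :: "'k::finite \<Rightarrow> real ^ 'm::finite \<Rightarrow> real"
    and gradL :: "'k \<Rightarrow> real ^ 'm \<Rightarrow> real ^ 'm"
    and nu :: "'k \<Rightarrow> real"
    and s :: "real ^ 'k \<Rightarrow> real ^ 'k \<Rightarrow> real"
    and th thhat :: "real ^ 'k \<Rightarrow> real ^ 'm"
    and r :: real
  assumes nonneg: "\<And>k t. 0 \<le> L k t"
    and grad: "\<And>k t. GDERIV (L k) t :> gradL k t"
    and smooth: "\<And>k. lipschitz_on (nu k) UNIV (gradL k)"
    and minimizer: "\<And>l t. l \<in> prob_simplex \<Longrightarrow> s l (Lvec L (th l)) \<le> s l (Lvec L t)"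
  defines "G \<equiv> Gsup gradL th"
    and "epsmax \<equiv> (SUP p\<in>UNIV \<times> prob_simplex. eps (Gsup gradL th (fst p)) (nu (fst p)) (thhat (snd p)) (th (snd p)))"
  shows
    "((\<forall>l x. s l x = (\<Sum>k\<in>UNIV. l $ k * x $ k)) \<longrightarrow>
        (\<forall>l\<in>prob_simplex.
           ereal ((\<Sum>k\<in>UNIV. l $ k * L k (thhat l)) - (INF t. \<Sum>k\<in>UNIV. l $ k * L k t))
             \<le> eps 0 (\<Sum>k\<in>UNIV. l $ k * nu k) (thhat l) (th l)))
     \<and> (\<forall>k. \<forall>l\<in>prob_simplex.
           ereal (L k (thhat l) - L k (th l)) \<le> eps (G k) (nu k) (thhat l) (th l))
     \<and> ((\<forall>l\<in>prob_simplex. 2 * infnorm (Lvec L (th l)) \<le> r)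
         \<and> (\<forall>l\<in>prob_simplex. \<forall>k. 0 \<le> L k (thhat l) \<and> L k (thhat l) \<le> r)
         \<and> epsmax \<le> ereal (r / 2)
        \<longrightarrow> HV r ((\<lambda>l. Lvec L (thhat l)) ` prob_simplex)
              \<ge> (1 - 2 * real_of_ereal epsmax / r) ^ CARD('k) * HV r ((\<lambda>l. Lvec L (th l)) ` prob_simplex))"
proof -
  have linear_gap: "ereal ((\<Sum>k\<in>UNIV. l $ k * L k (thhat l)) - (INF t. \<Sum>k\<in>UNIV. l $ k * L k t))
      \<le> eps 0 (\<Sum>k\<in>UNIV. l $ k * nu k) (thhat l) (th l)"
    if linear: "\<forall>l x. s l x = (\<Sum>k\<in>UNIV. l $ k * x $ k)" and l: "l \<in> prob_simplex" for l
    using l minimizer[OF l] linear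
    by (intro weighted_sum_gap_le_eps_at_minimum[OF _ grad smooth])
      (auto simp: prob_simplex_def Lvec_def)
  have gap: "ereal (L k (thhat l) - L k (th l)) \<le> eps (G k) (nu k) (thhat l) (th l)"
    if "l \<in> prob_simplex" for k l
    unfolding G_def using that by (intro gap_le_eps_of_gradient_bound[OF grad smooth] Gsup_ge_norm)
  have HV_ge: "(1 - 2 * real_of_ereal epsmax / r) ^ CARD('k) * HV r ((\<lambda>l. Lvec L (th l)) ` prob_simplex)
      \<le> HV r ((\<lambda>l. Lvec L (thhat l)) ` prob_simplex)"
    if front_le: "\<forall>l\<in>prob_simplex. 2 * infnorm (Lvec L (th l)) \<le> r" and eps_le: "epsmax \<le> ereal (r / 2)"
  proof -
    have "0 \<le> epsmax"
      unfolding epsmax_def using lipschitz_on_nonneg[OF smooth] by (rule SUP_eps_nonneg)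
    then obtain e where e: "epsmax = ereal e" "0 \<le> e" "2 * e \<le> r"
      using eps_le by (cases epsmax) auto
    have "L k (thhat l) \<le> L k (th l) + e" if l: "l \<in> prob_simplex" for k l
    proof -
      have "eps (G k) (nu k) (thhat l) (th l) \<le> epsmax"
        unfolding epsmax_def G_def using l by (intro SUP_upper2[of "(k, l)"]) auto
      with gap[OF l, of k] have "ereal (L k (thhat l) - L k (th l)) \<le> ereal e"
        unfolding e(1) by (rule order_trans)
      then show ?thesis
        by simp
    qed
    then show ?thesis
      using HV_front_approx_ge[OF e(2,3), of prob_simplex "\<lambda>l. Lvec L (th l)" "\<lambda>l. Lvec L (thhat l)"]
        front_le e(1) by (simp add: Lvec_def)
  qed
  show ?thesis
    using linear_gap gap HV_ge by blast
qed

end
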